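(* Let $k$ be a positive integer and $n\ge3$. Then $O_{R,k}(C_n)=\mathcal{N}$ if $n=3$ (for all $k\ge1$); $O_{R,k}(C_n)=\mathcal{M}$ if $n\ge4$ is even (for all $k\ge1$); and $O_{R,k}(C_n)=\mathcal{M}$ if $n\ge5$ is odd and $k\ge2$.
   Context: $C_n$ is the cycle on $n$ vertices. $d$ is the shortest-path distance and $d_k(x,y)=\min\{d(x,y),k+1\}$. A set $S$ is a distance-$k$ resolving set if for all distinct $x,y$ some $z\in S$ has $d_k(x,z)\ne d_k(y,z)$. In the Maker-Breaker distance-$k$ resolving game, Maker and Breaker alternately select a not-yet-chosen vertex; Maker wins if his selected vertices form a distance-$k$ resolving set, Breaker wins otherwise. $O_{R,k}(G)=\mathcal{M}$ if Maker has a winning strategy whether he moves first or second, $\mathcal{B}$ if Breaker has a winning strategy whether she moves first or second, and $\mathcal{N}$ if the first player has a winning strategy. *)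

theory Defs
  imports Main
begin

text \<open>A graph is given by a vertex set V and an edge relation E (set of ordered pairs,
  symmetric for undirected graphs).\<close>

definition graph_dist :: "('a \<times> 'a) set \<Rightarrow> 'a \<Rightarrow> 'a \<Rightarrow> nat" where
  "graph_dist E x y = (LEAST d. (x, y) \<in> E ^^ d)"

definition trunc_dist :: "nat \<Rightarrow> ('a \<times> 'a) set \<Rightarrow> 'a \<Rightarrow> 'a \<Rightarrow> nat" where
  "trunc_dist k E x y = min (graph_dist E x y) (k + 1)"

definition cycle_V :: "nat \<Rightarrow> nat set" where
  "cycle_V n = {0..<n}"

definition cycle_E :: "nat \<Rightarrow> (nat \<times> nat) set" where
  "cycle_E n = {(i, j). i < n \<and> j < n \<and> (j = (i + 1) mod n \<or> i = (j + 1) mod n)}"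

definition dist_k_resolving :: "nat \<Rightarrow> 'a set \<Rightarrow> ('a \<times> 'a) set \<Rightarrow> 'a set \<Rightarrow> bool" where
  "dist_k_resolving k V E S \<longleftrightarrow>
     (\<forall>x\<in>V. \<forall>y\<in>V. x \<noteq> y \<longrightarrow> (\<exists>z\<in>S. trunc_dist k E x z \<noteq> trunc_dist k E y z))"

text \<open>maker_win r maker_to_move V W M B: Maker can force a win from the position where
  Maker holds M, Breaker holds B, with at most r further moves remaining to be counted.
  Called with r = card V, the fuel never runs out before the board is exhausted.\<close>

fun maker_win :: "nat \<Rightarrow> bool \<Rightarrow> 'a set \<Rightarrow> ('a set \<Rightarrow> bool) \<Rightarrow> 'a set \<Rightarrow> 'a set \<Rightarrow> bool" where
  "maker_win 0 mt V W M B = W M"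
| "maker_win (Suc r) mt V W M B =
     (if V - (M \<union> B) = {} then W M
      else if mt then (\<exists>v\<in>V - (M \<union> B). maker_win r False V W (insert v M) B)
      else (\<forall>v\<in>V - (M \<union> B). maker_win r True V W M (insert v B)))"

definition maker_wins_first :: "'a set \<Rightarrow> ('a set \<Rightarrow> bool) \<Rightarrow> bool" where
  "maker_wins_first V W = maker_win (card V) True V W {} {}"

definition maker_wins_second :: "'a set \<Rightarrow> ('a set \<Rightarrow> bool) \<Rightarrow> bool" where
  "maker_wins_second V W = maker_win (card V) False V W {} {}"

text \<open>The game is finite and has no draws, so Breaker has a winning strategy when
  moving first (resp. second) iff Maker has none when moving second (resp. first).\<close>

definition breaker_wins_first :: "'a set \<Rightarrow> ('a set \<Rightarrow> bool) \<Rightarrow> bool" where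
  "breaker_wins_first V W = (\<not> maker_wins_second V W)"

definition breaker_wins_second :: "'a set \<Rightarrow> ('a set \<Rightarrow> bool) \<Rightarrow> bool" where
  "breaker_wins_second V W = (\<not> maker_wins_first V W)"

datatype outcome = Outcome_M | Outcome_B | Outcome_N | Outcome_P

definition game_outcome :: "'a set \<Rightarrow> ('a set \<Rightarrow> bool) \<Rightarrow> outcome" where
  "game_outcome V W =
     (if maker_wins_first V W \<and> maker_wins_second V W then Outcome_M
      else if breaker_wins_first V W \<and> breaker_wins_second V W then Outcome_B
      else if maker_wins_first V W \<and> breaker_wins_first V W then Outcome_N
      else Outcome_P)"

definition O_Rk :: "nat \<Rightarrow> 'a set \<Rightarrow> ('a \<times> 'a) set \<Rightarrow> outcome" where
  "O_Rk k V E = game_outcome V (dist_k_resolving k V E)"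

end

theory Submission
  imports Defs
begin

text \<open>
  Maker wins by a pairing strategy: if the vertices are grouped into disjoint pairs and
  Maker always answers Breaker by taking the partner of Breaker's vertex, Maker ends with a
  vertex of every pair, so it suffices that every set meeting all pairs is distance-k resolving.
  For \<open>n \<ge> 5\<close> pair \<open>2i\<close> with \<open>2i+1\<close>. Two vertices x, y not chosen by Maker are distinguished
  by their partners: otherwise both partners would be common neighbours of x and y, and two
  distinct vertices of a cycle of length at least 5 have at most one common neighbour.
  For odd n the last vertex stays unpaired and is distinguished from the others using the
  pairs \<open>{0,1}\<close>, \<open>{2,3}\<close>, \<open>{n-3,n-2}\<close>, which needs \<open>k \<ge> 2\<close>. On \<open>C\<^sub>4\<close> the antipodal pairs work.
  On \<open>C\<^sub>3\<close> exactly the sets of at least two vertices resolve, so the first player wins.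
\<close>

section \<open>Maker-Breaker games\<close>

definition pairing_safe :: "('a \<Rightarrow> 'a) \<Rightarrow> 'a set \<Rightarrow> 'a set \<Rightarrow> 'a set \<Rightarrow> bool" where
  "pairing_safe p V M B \<longleftrightarrow> (\<forall>x\<in>V. p x \<noteq> x \<longrightarrow> x \<in> M \<or> p x \<in> M \<or> x \<notin> B \<and> p x \<notin> B)"

lemma pairing_safe_insert_Maker: "pairing_safe p V M B \<Longrightarrow> pairing_safe p V (insert c M) B"
  unfolding pairing_safe_def by blast

lemma pairing_safe_board_full:
  assumes "pairing_safe p V M B" "V - (M \<union> B) = {}" "\<forall>x\<in>V. p x \<in> V"
  shows "\<forall>x\<in>V. p x \<noteq> x \<longrightarrow> x \<in> M \<or> p x \<in> M"
  using assms unfolding pairing_safe_def by blast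

lemma pairing_safe_Breaker_move:
  assumes "\<forall>x\<in>V. p x \<in> V" "\<forall>x\<in>V. p (p x) = x"
    and "pairing_safe p V M B" "v \<in> V - (M \<union> B)"
  shows "pairing_safe p V M (insert v B) \<or>
    p v \<in> V - (M \<union> insert v B) \<and> pairing_safe p V (insert (p v) M) (insert v B)"
proof (cases "p v \<noteq> v \<and> p v \<notin> M \<union> B")
  case True
  then have "pairing_safe p V (insert (p v) M) (insert v B)"
    using assms unfolding pairing_safe_def by (metis Un_iff insert_iff)
  then show ?thesis
    using True assms(1,4) by auto
next
  case False
  then have "pairing_safe p V M (insert v B)"
    using assms unfolding pairing_safe_def by (metis DiffE Un_iff insert_iff)
  then show ?thesis ..
qed

text \<open>With Breaker to move the position stays safe; with Maker to move it may be safe only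
  after Maker claims c, the partner of the vertex Breaker has just taken.\<close>

lemma maker_win_if_pairing_safe:
  assumes "finite V" "\<forall>x\<in>V. p x \<in> V" "\<forall>x\<in>V. p (p x) = x"
    and win: "\<And>S. \<forall>x\<in>V. p x \<noteq> x \<longrightarrow> x \<in> S \<or> p x \<in> S \<Longrightarrow> W S"
  shows "card (V - (M \<union> B)) \<le> r \<Longrightarrow>
    (pairing_safe p V M B \<longrightarrow> maker_win r False V W M B) \<and>
    (pairing_safe p V M B \<or> (\<exists>c\<in>V - (M \<union> B). pairing_safe p V (insert c M) B) \<longrightarrow>
      maker_win r True V W M B)"
proof (induction r arbitrary: M B)
  have final: "W M" if "pairing_safe p V M B" "V - (M \<union> B) = {}" for M B
    using win pairing_safe_board_full[OF that assms(2)] by blast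
  {
    case 0
    then have "V - (M \<union> B) = {}"
      using assms(1) by simp
    then show ?case
      using final by auto
  next
    case (Suc r)
    have fewer: "card (V - (insert v M \<union> B)) \<le> r" "card (V - (M \<union> insert v B)) \<le> r"
      if "v \<in> V - (M \<union> B)" for v
    proof -
      have "V - (insert v M \<union> B) = (V - (M \<union> B)) - {v}"
        and "V - (M \<union> insert v B) = (V - (M \<union> B)) - {v}"
        by auto
      then show "card (V - (insert v M \<union> B)) \<le> r" "card (V - (M \<union> insert v B)) \<le> r"
        using that Suc.prems assms(1) by simp_all
    qed
    show ?case
    proof (cases "V - (M \<union> B) = {}")
      case True
      then show ?thesis
        using final by auto
    next
      case nonempty: False
      have Breaker: "maker_win (Suc r) False V W M B" if "pairing_safe p V M B"
      proof -
        have "maker_win r True V W M (insert v B)" if "v \<in> V - (M \<union> B)" for v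
          using pairing_safe_Breaker_move[OF assms(2,3) \<open>pairing_safe p V M B\<close> that]
            Suc.IH[OF fewer(2)[OF that]] by auto
        then show ?thesis
          using nonempty by simp
      qed
      have Maker: "maker_win (Suc r) True V W M B"
        if invariant: "pairing_safe p V M B \<or> (\<exists>c\<in>V - (M \<union> B). pairing_safe p V (insert c M) B)"
      proof -
        obtain c where "c \<in> V - (M \<union> B)" "pairing_safe p V (insert c M) B"
          using invariant nonempty pairing_safe_insert_Maker by (metis ex_in_conv)
        then show ?thesis
          using nonempty Suc.IH[OF fewer(1)] by auto
      qed
      show ?thesis
        using Breaker Maker by blast
    qed
  }
qed

theorem maker_wins_by_pairing:
  assumes "finite V" "\<forall>x\<in>V. p x \<in> V" "\<forall>x\<in>V. p (p x) = x"
    and "\<And>S. \<forall>x\<in>V. p x \<noteq> x \<longrightarrow> x \<in> S \<or> p x \<in> S \<Longrightarrow> W S"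
  shows "maker_wins_first V W" "maker_wins_second V W"
proof -
  have "pairing_safe p V {} {}"
    unfolding pairing_safe_def by simp
  then show "maker_wins_first V W" "maker_wins_second V W"
    unfolding maker_wins_first_def maker_wins_second_def
    using maker_win_if_pairing_safe[OF assms, where M = "{}" and B = "{}" and r = "card V"] by auto
qed

lemma first_player_wins_on_three_vertices:
  assumes "card V = 3"
    and "\<And>S. S \<subseteq> V \<Longrightarrow> card S = 2 \<Longrightarrow> W S" "\<And>v. v \<in> V \<Longrightarrow> \<not> W {v}"
  shows "maker_wins_first V W" "\<not> maker_wins_second V W"
proof -
  obtain a b c where V: "V = {a, b, c}" "a \<noteq> b" "a \<noteq> c" "b \<noteq> c"
    using assms(1) card_3_iff by metis
  have three: "card V = Suc (Suc (Suc 0))"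
    using assms(1) by simp
  show "maker_wins_first V W"
    unfolding maker_wins_first_def three using assms(2) V
    by (simp add: insert_Diff_if insert_commute)
  show "\<not> maker_wins_second V W"
    unfolding maker_wins_second_def three using assms(3) V
    by (simp add: insert_Diff_if)
qed

section \<open>Distances in the cycle\<close>

definition cycle_dist :: "nat \<Rightarrow> nat \<Rightarrow> nat \<Rightarrow> nat" where
  "cycle_dist n x y = (let d = max x y - min x y in min d (n - d))"

lemma cycle_E_iff:
  "(x, y) \<in> cycle_E n \<longleftrightarrow> x < n \<and> y < n \<and>
     (y = x + 1 \<or> x = y + 1 \<or> x = n - 1 \<and> y = 0 \<or> y = n - 1 \<and> x = 0)"
proof -
  have "Suc a mod n = (if Suc a = n then 0 else Suc a)" if "a < n" for a
    using that by auto
  then show ?thesis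
    unfolding cycle_E_def by (auto split: if_splits)
qed

lemma sym_cycle_E: "sym (cycle_E n)"
  unfolding cycle_E_def sym_def by auto

lemma sym_relpow:
  assumes "sym E"
  shows "sym (E ^^ d)"
proof (induction d)
  case 0
  then show ?case by (simp add: sym_Id)
next
  case (Suc d)
  have "(y, x) \<in> E ^^ Suc d" if "(x, y) \<in> E ^^ Suc d" for x y
  proof -
    from that obtain w where "(x, w) \<in> E ^^ d" "(w, y) \<in> E"
      by (auto elim: relpow_Suc_E)
    then have "(y, w) \<in> E" "(w, x) \<in> E ^^ d"
      using assms Suc.IH by (auto dest: symD)
    then show ?thesis by (rule relpow_Suc_I2)
  qed
  then show ?case by (blast intro: symI)
qed

lemma cycle_E_relpow_forward:
  assumes "x < n"
  shows "(x, (x + d) mod n) \<in> cycle_E n ^^ d"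
proof (induction d)
  case 0
  then show ?case using assms by simp
next
  case (Suc d)
  have "((x + d) mod n, (x + Suc d) mod n) \<in> cycle_E n"
    unfolding cycle_E_def using assms by (simp add: mod_Suc_eq)
  with Suc.IH show ?case by (rule relpow_Suc_I)
qed

lemma cycle_dist_adjacent_le:
  assumes "x < n" "(w, y) \<in> cycle_E n"
  shows "cycle_dist n x y \<le> Suc (cycle_dist n x w)"
  using assms unfolding cycle_E_iff cycle_dist_def Let_def by (auto simp: min_def max_def)

lemma cycle_dist_le_relpow:
  assumes "x < n" "(x, y) \<in> cycle_E n ^^ d"
  shows "cycle_dist n x y \<le> d"
  using assms(2)
proof (induction d arbitrary: y)
  case 0
  then show ?case by (simp add: cycle_dist_def)
next
  case (Suc d)
  then obtain w where "(x, w) \<in> cycle_E n ^^ d" "(w, y) \<in> cycle_E n"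
    by (auto elim: relpow_Suc_E)
  then show ?case
    using Suc.IH cycle_dist_adjacent_le[OF assms(1)] by (meson Suc_le_mono le_trans)
qed

lemma relpow_cycle_dist:
  assumes "x < n" "y < n"
  shows "(x, y) \<in> cycle_E n ^^ cycle_dist n x y"
proof -
  have walks: "(a, b) \<in> cycle_E n ^^ (b - a)" "(a, b) \<in> cycle_E n ^^ (n - (b - a))"
    if "a \<le> b" "b < n" for a b
  proof -
    show "(a, b) \<in> cycle_E n ^^ (b - a)"
      using cycle_E_relpow_forward[of a n "b - a"] that by simp
    have "(b + (n - (b - a))) mod n = a"
      using that by (simp add: mod_if)
    then have "(b, a) \<in> cycle_E n ^^ (n - (b - a))"
      using cycle_E_relpow_forward[of b n "n - (b - a)"] that by simp
    then show "(a, b) \<in> cycle_E n ^^ (n - (b - a))"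
      using sym_relpow[OF sym_cycle_E] by (auto dest: symD)
  qed
  have sym_pow: "(a, b) \<in> cycle_E n ^^ m \<longleftrightarrow> (b, a) \<in> cycle_E n ^^ m" for a b m
    using sym_relpow[OF sym_cycle_E] by (auto dest: symD)
  show ?thesis
    using walks[of x y] walks[of y x] assms sym_pow
    unfolding cycle_dist_def Let_def min_def max_def by auto
qed

lemma graph_dist_cycle:
  assumes "x < n" "y < n"
  shows "graph_dist (cycle_E n) x y = cycle_dist n x y"
  unfolding graph_dist_def
  using relpow_cycle_dist[OF assms] cycle_dist_le_relpow[OF assms(1)]
  by (intro Least_equality) auto

lemma cycle_dist_eq_1_iff:
  assumes "n \<ge> 3" "x < n" "y < n"
  shows "cycle_dist n x y = 1 \<longleftrightarrow> (x, y) \<in> cycle_E n"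
  using assms unfolding cycle_E_iff cycle_dist_def Let_def by (auto simp: min_def max_def)

lemma cycle_common_neighbour_unique:
  assumes "n \<ge> 5" "x \<noteq> y"
    and "(x, u) \<in> cycle_E n" "(y, u) \<in> cycle_E n" "(x, v) \<in> cycle_E n" "(y, v) \<in> cycle_E n"
  shows "u = v"
  using assms unfolding cycle_E_iff by (elim conjE disjE; linarith)

lemma cycle_dist_eq_0_iff:
  assumes "x < n" "y < n"
  shows "cycle_dist n x y = 0 \<longleftrightarrow> x = y"
  using assms unfolding cycle_dist_def Let_def by (auto simp: min_def max_def)

section \<open>Resolving sets of cycles\<close>

definition cycle_separates :: "nat \<Rightarrow> nat \<Rightarrow> nat \<Rightarrow> nat \<Rightarrow> nat \<Rightarrow> bool" where
  "cycle_separates n k z x y \<longleftrightarrow> min (cycle_dist n x z) (k + 1) \<noteq> min (cycle_dist n y z) (k + 1)"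

lemma cycle_separates_commute: "cycle_separates n k z x y \<longleftrightarrow> cycle_separates n k z y x"
  unfolding cycle_separates_def by auto

lemma cycle_separates_by_member:
  assumes "x < n" "y < n" "x \<noteq> y" "x \<in> S \<or> y \<in> S"
  shows "\<exists>z\<in>S. z < n \<and> cycle_separates n k z x y"
proof -
  have "cycle_dist n x x = 0" "cycle_dist n y y = 0" "cycle_dist n x y \<noteq> 0" "cycle_dist n y x \<noteq> 0"
    using assms(1-3) cycle_dist_eq_0_iff by auto
  then have "cycle_separates n k x x y" "cycle_separates n k y x y"
    unfolding cycle_separates_def by auto
  then show ?thesis
    using assms by blast
qed

lemma cycle_separates_by_neighbour:
  assumes "n \<ge> 5" "k \<ge> 1" "x < n" "y < n" "u < n" "v < n" "x \<noteq> y" "u \<noteq> v"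
    and "(x, u) \<in> cycle_E n" "(y, v) \<in> cycle_E n"
  shows "cycle_separates n k u x y \<or> cycle_separates n k v x y"
proof (rule ccontr)
  assume no_separation: "\<not> ?thesis"
  have "cycle_dist n x u = 1" "cycle_dist n y v = 1"
    using assms cycle_dist_eq_1_iff[of n] by auto
  then have "cycle_dist n y u = 1" "cycle_dist n x v = 1"
    using no_separation assms(2) unfolding cycle_separates_def by (auto simp: min_def split: if_splits)
  then have "(y, u) \<in> cycle_E n" "(x, v) \<in> cycle_E n"
    using assms cycle_dist_eq_1_iff[of n] by auto
  then show False
    using cycle_common_neighbour_unique assms by blast
qed

lemma dist_k_resolving_cycleI:
  assumes "\<And>x y. x < n \<Longrightarrow> y < n \<Longrightarrow> x \<noteq> y \<Longrightarrow> \<exists>z\<in>S. z < n \<and> cycle_separates n k z x y"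
  shows "dist_k_resolving k (cycle_V n) (cycle_E n) S"
  unfolding dist_k_resolving_def cycle_V_def
proof (intro ballI impI)
  fix x y
  assume "x \<in> {0..<n}" "y \<in> {0..<n}" "x \<noteq> y"
  then obtain z where z: "z \<in> S" "z < n" "cycle_separates n k z x y"
    using assms by auto
  then have "trunc_dist k (cycle_E n) x z \<noteq> trunc_dist k (cycle_E n) y z"
    using \<open>x \<in> {0..<n}\<close> \<open>y \<in> {0..<n}\<close>
    unfolding trunc_dist_def cycle_separates_def by (simp add: graph_dist_cycle)
  with z show "\<exists>z\<in>S. trunc_dist k (cycle_E n) x z \<noteq> trunc_dist k (cycle_E n) y z"
    by blast
qed

definition adjacent_partner :: "nat \<Rightarrow> nat \<Rightarrow> nat" where
  "adjacent_partner n x = (if odd x then x - 1 else if x + 1 < n then x + 1 else x)"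

lemma adjacent_partner_less: "x < n \<Longrightarrow> adjacent_partner n x < n"
  unfolding adjacent_partner_def by auto

lemma adjacent_partner_involution: "x < n \<Longrightarrow> adjacent_partner n (adjacent_partner n x) = x"
  unfolding adjacent_partner_def by (auto dest: odd_pos)

lemma adjacent_partner_eq_self_iff:
  "x < n \<Longrightarrow> adjacent_partner n x = x \<longleftrightarrow> odd n \<and> x = n - 1"
  unfolding adjacent_partner_def by (auto dest: odd_pos) presburger+

lemma adjacent_partner_adjacent:
  "x < n \<Longrightarrow> adjacent_partner n x \<noteq> x \<Longrightarrow> (x, adjacent_partner n x) \<in> cycle_E n"
  unfolding adjacent_partner_def cycle_E_iff by auto

lemma odd_cycle_separates_from_last:
  assumes "odd n" "n \<ge> 5" "k \<ge> 2" "x < n - 1" "x \<notin> S"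
    and S: "0 \<in> S \<or> 1 \<in> S" "2 \<in> S \<or> 3 \<in> S" "n - 3 \<in> S \<or> n - 2 \<in> S"
  shows "\<exists>z\<in>S. z < n \<and> cycle_separates n k z x (n - 1)"
proof -
  note unfold = cycle_separates_def cycle_dist_def Let_def min_def max_def
  have "n \<noteq> 6"
    using \<open>odd n\<close> by auto
  have by_0: "cycle_separates n k 0 x (n - 1)" if "x \<noteq> 0" "x \<noteq> 1"
    using that assms(2-4) unfolding unfold by auto
  \<comment> \<open>\<open>by_1\<close> and \<open>by_n3\<close> tell distance 2 from distances \<open>\<ge> 3\<close>,
    which truncation at \<open>k + 1\<close> keeps apart only for \<open>k \<ge> 2\<close>\<close>
  have by_1: "cycle_separates n k 1 x (n - 1)" if "x \<noteq> 1" "x \<noteq> 3"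
    using that assms(2-4) unfolding unfold by auto
  have by_2: "cycle_separates n k 2 3 (n - 1)"
    and by_n2: "cycle_separates n k (n - 2) 1 (n - 1)"
    and by_n3: "cycle_separates n k (n - 3) 1 (n - 1)"
    using assms(2,3) \<open>n \<noteq> 6\<close> unfolding unfold by auto
  show ?thesis
  proof (cases "(0::nat) \<in> S")
    case True
    show ?thesis
    proof (cases "x = 1")
      case True
      moreover have "n - 3 < n" "n - 2 < n"
        using \<open>n \<ge> 5\<close> by auto
      ultimately show ?thesis
        using by_n2 by_n3 S(3) by blast
    next
      case False
      moreover have "x \<noteq> 0"
        using \<open>0 \<in> S\<close> \<open>x \<notin> S\<close> by metis
      ultimately have "cycle_separates n k 0 x (n - 1)"
        using by_0 by blast
      then show ?thesis
        using \<open>0 \<in> S\<close> \<open>n \<ge> 5\<close> by (intro bexI[of _ 0]) auto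
    qed
  next
    case False
    then have "1 \<in> S" "x \<noteq> 1"
      using S(1) \<open>x \<notin> S\<close> by auto
    show ?thesis
    proof (cases "x = 3")
      case True
      then have "2 \<in> S"
        using S(2) \<open>x \<notin> S\<close> by auto
      then show ?thesis
        using by_2 True \<open>n \<ge> 5\<close> by (intro bexI[of _ 2]) auto
    next
      case False
      then show ?thesis
        using by_1 \<open>1 \<in> S\<close> \<open>x \<noteq> 1\<close> \<open>n \<ge> 5\<close> by (intro bexI[of _ 1]) auto
    qed
  qed
qed

lemma dist_k_resolving_adjacent_pairs:
  assumes "n \<ge> 5" "k \<ge> 1" "odd n \<Longrightarrow> k \<ge> 2"
    and hits: "\<forall>x\<in>cycle_V n. adjacent_partner n x \<noteq> x \<longrightarrow> x \<in> S \<or> adjacent_partner n x \<in> S"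
  shows "dist_k_resolving k (cycle_V n) (cycle_E n) S"
proof (rule dist_k_resolving_cycleI)
  let ?p = "adjacent_partner n"
  have partner_in: "?p a \<in> S" if "a < n" "a \<notin> S" "?p a \<noteq> a" for a
    using hits that by (auto simp: cycle_V_def)
  have separated_from_last: "\<exists>z\<in>S. z < n \<and> cycle_separates n k z a (n - 1)"
    if "odd n" "a < n - 1" "a \<notin> S" for a
  proof (rule odd_cycle_separates_from_last[OF that(1) assms(1) assms(3)[OF that(1)] that(2,3)])
    have partners: "?p 0 = 1" "?p 2 = 3" "?p (n - 3) = n - 2"
      using assms(1) that(1) unfolding adjacent_partner_def by auto
    have "a \<in> S \<or> ?p a \<in> S" if "a < n" "?p a \<noteq> a" for a
      using hits that by (auto simp: cycle_V_def)
    from this[of 0] this[of 2] this[of "n - 3"]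
    show "0 \<in> S \<or> 1 \<in> S" "2 \<in> S \<or> 3 \<in> S" "n - 3 \<in> S \<or> n - 2 \<in> S"
      using assms(1) unfolding partners by auto
  qed
  fix x y
  assume xy: "x < n" "y < n" "x \<noteq> y"
  consider "x \<in> S \<or> y \<in> S" | "x \<notin> S" "y \<notin> S" "?p x \<noteq> x" "?p y \<noteq> y"
    | "x \<notin> S" "y \<notin> S" "?p x = x" | "x \<notin> S" "y \<notin> S" "?p y = y"
    by blast
  then show "\<exists>z\<in>S. z < n \<and> cycle_separates n k z x y"
  proof cases
    case 1
    with xy show ?thesis
      by (rule cycle_separates_by_member)
  next
    case 2
    then have "cycle_separates n k (?p x) x y \<or> cycle_separates n k (?p y) x y"
      using xy assms(1,2) adjacent_partner_less adjacent_partner_adjacent adjacent_partner_involution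
      by (intro cycle_separates_by_neighbour) metis+
    then show ?thesis
      using 2 xy partner_in adjacent_partner_less by blast
  next
    case 3
    then have "odd n" "x = n - 1" "y < n - 1"
      using xy adjacent_partner_eq_self_iff by auto
    then show ?thesis
      using separated_from_last[of y] 3 cycle_separates_commute by metis
  next
    case 4
    then have "odd n" "y = n - 1" "x < n - 1"
      using xy adjacent_partner_eq_self_iff by auto
    then show ?thesis
      using separated_from_last[of x] 4 by metis
  qed
qed

lemma dist_k_resolving_cycle4:
  assumes "k \<ge> 1" "0 \<in> S \<or> 2 \<in> S" "1 \<in> S \<or> 3 \<in> S"
  shows "dist_k_resolving k (cycle_V 4) (cycle_E 4) S"
proof (rule dist_k_resolving_cycleI)
  fix x y :: nat
  assume xy: "x < 4" "y < 4" "x \<noteq> y"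
  have separates: "cycle_separates 4 k a x y \<or> cycle_separates 4 k b x y"
    if "a = 0 \<or> a = 2" "b = 1 \<or> b = 3" for a b
  proof -
    have "x = 0 \<or> x = 1 \<or> x = 2 \<or> x = 3" "y = 0 \<or> y = 1 \<or> y = 2 \<or> y = 3"
      using xy by auto
    then show ?thesis
      using that xy(3) assms(1) unfolding cycle_separates_def cycle_dist_def Let_def
      by (elim disjE) (simp_all add: min_def)
  qed
  obtain a b where "a \<in> S" "a = 0 \<or> a = 2" "b \<in> S" "b = 1 \<or> b = 3"
    using assms(2,3) by blast
  then show "\<exists>z\<in>S. z < 4 \<and> cycle_separates 4 k z x y"
    using separates[of a b] by (auto intro: bexI[of _ a] bexI[of _ b])
qed

lemma dist_k_resolving_cycle3_pair:
  assumes "S \<subseteq> cycle_V 3" "card S = 2"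
  shows "dist_k_resolving k (cycle_V 3) (cycle_E 3) S"
proof (rule dist_k_resolving_cycleI)
  fix x y :: nat
  assume xy: "x < 3" "y < 3" "x \<noteq> y"
  have "x \<in> S \<or> y \<in> S"
  proof (rule ccontr)
    assume "\<not> ?thesis"
    then have "S \<subseteq> cycle_V 3 - {x, y}"
      using assms(1) by auto
    then have "card S \<le> card (cycle_V 3 - {x, y})"
      by (intro card_mono) (simp_all add: cycle_V_def)
    also have "\<dots> = 1"
      using xy by (simp add: cycle_V_def card_Diff_subset)
    finally show False
      using assms(2) by simp
  qed
  with xy show "\<exists>z\<in>S. z < 3 \<and> cycle_separates 3 k z x y"
    by (rule cycle_separates_by_member)
qed

lemma cycle3_dist_other:
  assumes "x < 3" "z < 3" "x \<noteq> z"
  shows "cycle_dist 3 x z = 1"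
proof -
  have "x = 0 \<or> x = 1 \<or> x = 2" "z = 0 \<or> z = 1 \<or> z = 2"
    using assms by auto
  then show ?thesis
    using assms(3) unfolding cycle_dist_def Let_def by (elim disjE) simp_all
qed

lemma not_dist_k_resolving_cycle3_singleton:
  assumes "z < 3"
  shows "\<not> dist_k_resolving k (cycle_V 3) (cycle_E 3) {z}"
proof
  assume resolving: "dist_k_resolving k (cycle_V 3) (cycle_E 3) {z}"
  obtain x y where xy: "x < 3" "y < 3" "x \<noteq> y" "x \<noteq> z" "y \<noteq> z"
  proof -
    have "z = 0 \<or> z = 1 \<or> z = 2"
      using assms by auto
    then show thesis
      using that[of "(z + 1) mod 3" "(z + 2) mod 3"] by auto
  qed
  then have "trunc_dist k (cycle_E 3) x z = trunc_dist k (cycle_E 3) y z"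
    using assms by (simp add: trunc_dist_def graph_dist_cycle cycle3_dist_other)
  then show False
    using resolving xy unfolding dist_k_resolving_def cycle_V_def by auto
qed

lemma game_outcome_eq_M:
  "maker_wins_first V W \<Longrightarrow> maker_wins_second V W \<Longrightarrow> game_outcome V W = Outcome_M"
  unfolding game_outcome_def by simp

lemma game_outcome_eq_N:
  "maker_wins_first V W \<Longrightarrow> \<not> maker_wins_second V W \<Longrightarrow> game_outcome V W = Outcome_N"
  unfolding game_outcome_def breaker_wins_first_def breaker_wins_second_def by simp

lemma O_Rk_cycle3: "O_Rk k (cycle_V 3) (cycle_E 3) = Outcome_N"
proof -
  have "card (cycle_V 3) = 3"
    by (simp add: cycle_V_def)
  then show ?thesis
    unfolding O_Rk_def
    using first_player_wins_on_three_vertices[of "cycle_V 3" "dist_k_resolving k (cycle_V 3) (cycle_E 3)"]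
      dist_k_resolving_cycle3_pair not_dist_k_resolving_cycle3_singleton
    by (auto simp: cycle_V_def intro: game_outcome_eq_N)
qed

lemma O_Rk_cycle4:
  assumes "k \<ge> 1"
  shows "O_Rk k (cycle_V 4) (cycle_E 4) = Outcome_M"
proof -
  let ?p = "\<lambda>x::nat. if x < 2 then x + 2 else x - 2"
  have "dist_k_resolving k (cycle_V 4) (cycle_E 4) S"
    if "\<forall>x\<in>cycle_V 4. ?p x \<noteq> x \<longrightarrow> x \<in> S \<or> ?p x \<in> S" for S
    using that[rule_format, of 0] that[rule_format, of 1]
    by (intro dist_k_resolving_cycle4[OF assms]) (simp_all add: cycle_V_def eval_nat_numeral)
  moreover have "\<forall>x\<in>cycle_V 4. ?p x \<in> cycle_V 4" "\<forall>x\<in>cycle_V 4. ?p (?p x) = x"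
    by (auto simp: cycle_V_def)
  ultimately show ?thesis
    unfolding O_Rk_def
    using maker_wins_by_pairing[of "cycle_V 4" ?p] by (simp add: cycle_V_def game_outcome_eq_M)
qed

lemma O_Rk_cycle_adjacent_pairs:
  assumes "n \<ge> 5" "k \<ge> 1" "odd n \<Longrightarrow> k \<ge> 2"
  shows "O_Rk k (cycle_V n) (cycle_E n) = Outcome_M"
proof -
  have "\<forall>x\<in>cycle_V n. adjacent_partner n x \<in> cycle_V n"
    and "\<forall>x\<in>cycle_V n. adjacent_partner n (adjacent_partner n x) = x"
    by (simp_all add: cycle_V_def adjacent_partner_less adjacent_partner_involution)
  then show ?thesis
    unfolding O_Rk_def
    using maker_wins_by_pairing[of "cycle_V n" "adjacent_partner n"]
      dist_k_resolving_adjacent_pairs[OF assms]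
    by (simp add: cycle_V_def game_outcome_eq_M)
qed

theorem proposition3p5:
  fixes k n :: nat
  assumes "k \<ge> 1" and "n \<ge> 3"
  shows "(n = 3 \<longrightarrow> O_Rk k (cycle_V n) (cycle_E n) = Outcome_N)
       \<and> (even n \<and> n \<ge> 4 \<longrightarrow> O_Rk k (cycle_V n) (cycle_E n) = Outcome_M)
       \<and> (odd n \<and> n \<ge> 5 \<and> k \<ge> 2 \<longrightarrow> O_Rk k (cycle_V n) (cycle_E n) = Outcome_M)"
proof (intro conjI impI)
  show "O_Rk k (cycle_V n) (cycle_E n) = Outcome_N" if "n = 3"
    using that O_Rk_cycle3 by simp
  show "O_Rk k (cycle_V n) (cycle_E n) = Outcome_M" if "even n \<and> n \<ge> 4"
  proof (cases "n = 4")
    case True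
    then show ?thesis
      using O_Rk_cycle4[OF assms(1)] by simp
  next
    case False
    then show ?thesis
      using that assms(1) by (intro O_Rk_cycle_adjacent_pairs) auto
  qed
  show "O_Rk k (cycle_V n) (cycle_E n) = Outcome_M" if "odd n \<and> n \<ge> 5 \<and> k \<ge> 2"
    using that by (intro O_Rk_cycle_adjacent_pairs) auto
qed

end
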